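(* Let $E$ and $F$ be weighted geometric mean closed Archimedean vector lattices over $\mathbb{K}$, let $n\in\mathbb{N}$, and let $r_1,\dots,r_n\in(0,1)$ with $\sum_{k=1}^n r_k=1$. (1) For every positive linear map $T\colon E\to F$ and all $f_1,\dots,f_n\in E$: $T\bigl(\triangle_{k=1}^n(f_k,r_k)\bigr)\le\triangle_{k=1}^n\bigl(T(|f_k|),r_k\bigr)$. (2) A linear map $T\colon E\to F$ is a vector lattice homomorphism if and only if $T\bigl(\triangle_{k=1}^n(f_k,r_k)\bigr)=\triangle_{k=1}^n\bigl(T(f_k),r_k\bigr)$ for all $f_1,\dots,f_n\in E$. (3) If $G$ is a (not necessarily weighted geometric mean closed) vector sublattice of $E$, $T\colon G\to F$ is a vector lattice homomorphism, and $f_1,\dots,f_n\in G$ with $\triangle_{k=1}^n(f_k,r_k)\in G$, then $T\bigl(\triangle_{k=1}^n(f_k,r_k)\bigr)=\triangle_{k=1}^n\bigl(T(f_k),r_k\bigr)$.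
   Context: $\mathbb{K}$ denotes $\mathbb{R}$ or $\mathbb{C}$. An Archimedean real vector lattice $E$ is square mean closed if $\sup\{(\cos\theta)f+(\sin\theta)g:\theta\in[0,2\pi]\}$ exists in $E$ for all $f,g\in E$. An Archimedean vector lattice over $\mathbb{C}$ is a complex vector space $E+iE$ (complexification) where $E$ is a square mean closed Archimedean real vector lattice; its modulus is $|f+ig|=\sup\{(\cos\theta)f+(\sin\theta)g:\theta\in[0,2\pi]\}$. An Archimedean vector lattice over $\mathbb{R}$ is an Archimedean real vector lattice with $|f|=f\vee(-f)$. For such $E$: $E^{+}=\{f\in E:|f|=f\}$, $E_\rho=\{f-g:f,g\in E^+\}$, ordered as a real vector lattice; infima are in $E_\rho$. $E$ is weighted geometric mean closed if for every $n$, all $f_1,\dots,f_n\in E$ and all $r_1,\dots,r_n\in(0,1)$ with $\sum r_k=1$, the infimum $\triangle_{k=1}^n(f_k,r_k):=\inf\{\sum_{k=1}^n r_k\theta_k|f_k|:\theta_k\in(0,\infty),\ \prod_{k=1}^n\theta_k^{r_k}=1\}$ exists in $E$. A linear map $T$ is positive if $T(E^+)\subseteq F^+$; it is a vector lattice homomorphism if $|T(f)|=T(|f|)$ for all $f$. A vector sublattice of $E$ is a $\mathbb{K}$-linear subspace closed under the modulus. *)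

theory Defs
  imports Complex_Main "HOL-Library.Product_Plus"
begin

class real_vector_lattice = ordered_real_vector + lattice

class archimedean_real_vector_lattice = real_vector_lattice +
  assumes archimedean: "0 \<le> x \<Longrightarrow> (\<And>n::nat. real n *\<^sub>R x \<le> y) \<Longrightarrow> x = 0"

definition is_inf :: "'a::order set \<Rightarrow> 'a \<Rightarrow> bool" where
  "is_inf S x \<longleftrightarrow> (\<forall>s\<in>S. x \<le> s) \<and> (\<forall>y. (\<forall>s\<in>S. y \<le> s) \<longrightarrow> y \<le> x)"

definition is_sup :: "'a::order set \<Rightarrow> 'a \<Rightarrow> bool" where
  "is_sup S x \<longleftrightarrow> (\<forall>s\<in>S. s \<le> x) \<and> (\<forall>y. (\<forall>s\<in>S. s \<le> y) \<longrightarrow> x \<le> y)"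

definition vabs :: "'a::real_vector_lattice \<Rightarrow> 'a" where
  "vabs f = sup f (- f)"

definition pos_R :: "'a::real_vector_lattice \<Rightarrow> bool" where
  "pos_R f \<longleftrightarrow> vabs f = f"

definition wgm_set_R :: "(nat \<Rightarrow> 'a::real_vector_lattice) \<Rightarrow> (nat \<Rightarrow> real) \<Rightarrow> nat \<Rightarrow> 'a set" where
  "wgm_set_R f r n = {(\<Sum>k\<in>{1..n}. (r k * \<theta> k) *\<^sub>R vabs (f k)) | \<theta>.
      (\<forall>k\<in>{1..n}. 0 < \<theta> k) \<and> (\<Prod>k\<in>{1..n}. \<theta> k powr r k) = 1}"

definition wgm_R :: "(nat \<Rightarrow> 'a::real_vector_lattice) \<Rightarrow> (nat \<Rightarrow> real) \<Rightarrow> nat \<Rightarrow> 'a" where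
  "wgm_R f r n = (THE x. is_inf (wgm_set_R f r n) x)"

definition wgm_closed_R :: "'a::archimedean_real_vector_lattice itself \<Rightarrow> bool" where
  "wgm_closed_R _ \<longleftrightarrow> (\<forall>n (f::nat \<Rightarrow> 'a) r.
      (\<forall>k\<in>{1..n}. 0 < r k \<and> r k < 1) \<and> (\<Sum>k\<in>{1..n}. r k) = 1
        \<longrightarrow> (\<exists>x. is_inf (wgm_set_R f r n) x))"

definition positive_map_R :: "('a::real_vector_lattice \<Rightarrow> 'b::real_vector_lattice) \<Rightarrow> bool" where
  "positive_map_R T \<longleftrightarrow> (\<forall>f. pos_R f \<longrightarrow> pos_R (T f))"

definition vl_hom_on_R :: "'a::real_vector_lattice set \<Rightarrow> ('a \<Rightarrow> 'b::real_vector_lattice) \<Rightarrow> bool" where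
  "vl_hom_on_R G T \<longleftrightarrow> (\<forall>f\<in>G. vabs (T f) = T (vabs f))"

definition sublattice_R :: "'a::real_vector_lattice set \<Rightarrow> bool" where
  "sublattice_R G \<longleftrightarrow> 0 \<in> G \<and> (\<forall>x\<in>G. \<forall>y\<in>G. x + y \<in> G) \<and> (\<forall>c x. x \<in> G \<longrightarrow> c *\<^sub>R x \<in> G)
      \<and> (\<forall>x\<in>G. vabs x \<in> G)"

definition linear_on_R :: "'a::real_vector set \<Rightarrow> ('a \<Rightarrow> 'b::real_vector) \<Rightarrow> bool" where
  "linear_on_R G T \<longleftrightarrow> (\<forall>x\<in>G. \<forall>y\<in>G. T (x + y) = T x + T y) \<and> (\<forall>c. \<forall>x\<in>G. T (c *\<^sub>R x) = c *\<^sub>R T x)"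

section \<open>Case K = C: the complexification E + iE, represented as pairs (f, g) = f + i g\<close>

definition square_mean_closed :: "'a::real_vector_lattice itself \<Rightarrow> bool" where
  "square_mean_closed _ \<longleftrightarrow> (\<forall>f g::'a. \<exists>s. is_sup {cos \<theta> *\<^sub>R f + sin \<theta> *\<^sub>R g | \<theta>. \<theta> \<in> {0..2*pi}} s)"

text \<open>Real-valued modulus |f + i g| (an element of E).\<close>
definition cabs_re :: "'a::real_vector_lattice \<times> 'a \<Rightarrow> 'a" where
  "cabs_re z = (THE s. is_sup {cos \<theta> *\<^sub>R fst z + sin \<theta> *\<^sub>R snd z | \<theta>. \<theta> \<in> {0..2*pi}} s)"

definition cvabs :: "'a::real_vector_lattice \<times> 'a \<Rightarrow> 'a \<times> 'a" where
  "cvabs z = (cabs_re z, 0)"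

definition cscale :: "complex \<Rightarrow> 'a::real_vector \<times> 'a \<Rightarrow> 'a \<times> 'a" where
  "cscale c z = (Re c *\<^sub>R fst z - Im c *\<^sub>R snd z, Re c *\<^sub>R snd z + Im c *\<^sub>R fst z)"

definition pos_C :: "'a::real_vector_lattice \<times> 'a \<Rightarrow> bool" where
  "pos_C z \<longleftrightarrow> cvabs z = z"

text \<open>Order of E_rho, written on E + iE: z <= w iff w - z is in E+.\<close>
definition le_C :: "'a::real_vector_lattice \<times> 'a \<Rightarrow> 'a \<times> 'a \<Rightarrow> bool" where
  "le_C z w \<longleftrightarrow> pos_C (w - z)"

definition wgm_set_C :: "(nat \<Rightarrow> 'a::real_vector_lattice \<times> 'a) \<Rightarrow> (nat \<Rightarrow> real) \<Rightarrow> nat \<Rightarrow> 'a set" where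
  "wgm_set_C f r n = {(\<Sum>k\<in>{1..n}. (r k * \<theta> k) *\<^sub>R cabs_re (f k)) | \<theta>.
      (\<forall>k\<in>{1..n}. 0 < \<theta> k) \<and> (\<Prod>k\<in>{1..n}. \<theta> k powr r k) = 1}"

definition wgm_C :: "(nat \<Rightarrow> 'a::real_vector_lattice \<times> 'a) \<Rightarrow> (nat \<Rightarrow> real) \<Rightarrow> nat \<Rightarrow> 'a \<times> 'a" where
  "wgm_C f r n = ((THE x. is_inf (wgm_set_C f r n) x), 0)"

definition wgm_closed_C :: "'a::archimedean_real_vector_lattice itself \<Rightarrow> bool" where
  "wgm_closed_C _ \<longleftrightarrow> (\<forall>n (f::nat \<Rightarrow> 'a \<times> 'a) r.
      (\<forall>k\<in>{1..n}. 0 < r k \<and> r k < 1) \<and> (\<Sum>k\<in>{1..n}. r k) = 1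
        \<longrightarrow> (\<exists>x. is_inf (wgm_set_C f r n) x))"

definition clinear_on :: "('a::real_vector \<times> 'a) set \<Rightarrow> ('a \<times> 'a \<Rightarrow> 'b::real_vector \<times> 'b) \<Rightarrow> bool" where
  "clinear_on G T \<longleftrightarrow> (\<forall>x\<in>G. \<forall>y\<in>G. T (x + y) = T x + T y) \<and> (\<forall>c. \<forall>x\<in>G. T (cscale c x) = cscale c (T x))"

definition positive_map_C :: "('a::real_vector_lattice \<times> 'a \<Rightarrow> 'b::real_vector_lattice \<times> 'b) \<Rightarrow> bool" where
  "positive_map_C T \<longleftrightarrow> (\<forall>z. pos_C z \<longrightarrow> pos_C (T z))"

definition vl_hom_on_C :: "('a::real_vector_lattice \<times> 'a) set \<Rightarrow> ('a \<times> 'a \<Rightarrow> 'b::real_vector_lattice \<times> 'b) \<Rightarrow> bool" where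
  "vl_hom_on_C G T \<longleftrightarrow> (\<forall>z\<in>G. cvabs (T z) = T (cvabs z))"

definition sublattice_C :: "('a::real_vector_lattice \<times> 'a) set \<Rightarrow> bool" where
  "sublattice_C G \<longleftrightarrow> 0 \<in> G \<and> (\<forall>x\<in>G. \<forall>y\<in>G. x + y \<in> G) \<and> (\<forall>c x. x \<in> G \<longrightarrow> cscale c x \<in> G)
      \<and> (\<forall>x\<in>G. cvabs x \<in> G)"

end

theory Submission
  imports Defs "HOL-Library.Lattice_Algebras" "HOL-Library.FuncSet"
begin

text \<open>
  Positive maps are monotone, so they map the infimum below every weighted sum
  \<open>\<Sum> r\<^sub>k \<theta>\<^sub>k T|f\<^sub>k|\<close>, which is (1).  For a lattice homomorphism the reverse inequality needs
  an approximation argument, because the set of admissible weights \<open>\<theta>\<close> is not compact: a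
  finite family of weights dominating every admissible weight up to \<open>c\<close> in each coordinate
  replaces the infimum by a finite infimum, at the cost of an error \<open>c \<Sum>|f\<^sub>k|\<close>.  Finite
  infima commute with lattice homomorphisms, and the Archimedean property removes the error
  as \<open>c \<rightarrow> 0\<close>; this gives (3), and (2) in one direction.  Conversely, for \<open>f\<^sub>k = f\<close> the
  mean is \<open>|f|\<close> by the weighted AM-GM inequality, so preserving means forces preserving
  moduli.  The complex case reduces to the real one: the complex mean is the real mean of the
  moduli, and a complex lattice homomorphism restricts to a real one between the real parts.\<close>

subclass (in real_vector_lattice) lattice_ab_group_add ..

lemma vabs_ge: "x \<le> vabs x" "- x \<le> vabs x"
  unfolding vabs_def by simp_all

lemma vabs_nonneg: "0 \<le> vabs (x::'a::real_vector_lattice)"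
proof -
  have "x + - x \<le> vabs x + vabs x" by (intro add_mono vabs_ge)
  then show ?thesis by simp
qed

lemma vabs_eq_self_iff: "vabs x = x \<longleftrightarrow> 0 \<le> (x::'a::real_vector_lattice)"
  unfolding vabs_def by (metis le_iff_sup sup_commute minus_le_self_iff)

lemma vabs_of_nonneg: "0 \<le> (x::'a::real_vector_lattice) \<Longrightarrow> vabs x = x"
  by (simp add: vabs_eq_self_iff)

lemma pos_R_iff: "pos_R (x::'a::real_vector_lattice) \<longleftrightarrow> 0 \<le> x"
  by (simp add: pos_R_def vabs_eq_self_iff)

lemma scaleR_sup_distrib:
  fixes a b :: "'a::real_vector_lattice"
  assumes "0 < c"
  shows "c *\<^sub>R sup a b = sup (c *\<^sub>R a) (c *\<^sub>R b)"
proof (rule order.antisym)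
  show "sup (c *\<^sub>R a) (c *\<^sub>R b) \<le> c *\<^sub>R sup a b"
    using assms by (simp add: scaleR_left_mono)
  have "inverse c *\<^sub>R (c *\<^sub>R a) \<le> inverse c *\<^sub>R sup (c *\<^sub>R a) (c *\<^sub>R b)"
    and "inverse c *\<^sub>R (c *\<^sub>R b) \<le> inverse c *\<^sub>R sup (c *\<^sub>R a) (c *\<^sub>R b)"
    using assms by (intro scaleR_left_mono; simp)+
  then have "c *\<^sub>R sup a b \<le> c *\<^sub>R (inverse c *\<^sub>R sup (c *\<^sub>R a) (c *\<^sub>R b))"
    using assms by (intro scaleR_left_mono) auto
  then show "c *\<^sub>R sup a b \<le> sup (c *\<^sub>R a) (c *\<^sub>R b)"
    using assms by simp
qed

lemma pprt_eq_half_vabs_add: "pprt (x::'a::real_vector_lattice) = (1/2::real) *\<^sub>R (vabs x + x)"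
proof -
  have "vabs x + x = sup (2 *\<^sub>R x) 0"
    unfolding vabs_def by (simp add: add_sup_distrib_right scaleR_2)
  also have "\<dots> = 2 *\<^sub>R pprt x"
    unfolding pprt_def using scaleR_sup_distrib[of 2 x 0] by simp
  finally show ?thesis by simp
qed

lemma inf_eq_diff_pprt: "inf x y = x - pprt (x - (y::'a::real_vector_lattice))"
  by (simp add: pprt_def add_inf_distrib_left inf_commute)

lemma scaleR_le_vabs:
  assumes "\<bar>c\<bar> \<le> 1"
  shows "c *\<^sub>R (x::'a::real_vector_lattice) \<le> vabs x"
proof (cases "0 \<le> c")
  case True
  have "c *\<^sub>R x \<le> c *\<^sub>R vabs x" using True vabs_ge by (intro scaleR_left_mono)
  also have "\<dots> \<le> 1 *\<^sub>R vabs x" using True assms vabs_nonneg by (intro scaleR_right_mono) auto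
  finally show ?thesis by simp
next
  case False
  have "c *\<^sub>R x = (- c) *\<^sub>R (- x)" by simp
  also have "\<dots> \<le> (- c) *\<^sub>R vabs x" using False vabs_ge by (intro scaleR_left_mono) auto
  also have "\<dots> \<le> 1 *\<^sub>R vabs x" using False assms vabs_nonneg by (intro scaleR_right_mono) auto
  finally show ?thesis by simp
qed

lemma archimedean_nonpos:
  fixes x u :: "'a::archimedean_real_vector_lattice"
  assumes "0 \<le> u" and small: "\<And>c. 0 < c \<Longrightarrow> c \<le> 1 \<Longrightarrow> x \<le> c *\<^sub>R u"
  shows "x \<le> 0"
proof -
  have "real N *\<^sub>R pprt x \<le> u" for N :: nat
  proof -
    define c where "c = 1 / (real N + 1)"
    have c: "0 < c" "c \<le> 1" unfolding c_def by (auto simp: field_simps)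
    have "pprt x \<le> c *\<^sub>R u"
      unfolding pprt_def using small[OF c] c assms(1) by (simp add: scaleR_nonneg_nonneg)
    then have "(real N + 1) *\<^sub>R pprt x \<le> (real N + 1) *\<^sub>R (c *\<^sub>R u)"
      by (intro scaleR_left_mono) auto
    moreover have "real N *\<^sub>R pprt x \<le> (real N + 1) *\<^sub>R pprt x"
      by (intro scaleR_right_mono) auto
    ultimately show ?thesis unfolding c_def by simp
  qed
  then have "pprt x = 0" using archimedean zero_le_pprt by blast
  then show ?thesis by (simp add: le_zero_iff_zero_pprt)
qed


section \<open>Admissible weights\<close>

definition wgm_weights :: "(nat \<Rightarrow> real) \<Rightarrow> nat \<Rightarrow> (nat \<Rightarrow> real) set" where
  "wgm_weights r n = {\<theta>. (\<forall>k\<in>{1..n}. 0 < \<theta> k) \<and> (\<Prod>k\<in>{1..n}. \<theta> k powr r k) = 1}"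

lemma const_one_in_wgm_weights: "(\<lambda>_. 1) \<in> wgm_weights r n"
  unfolding wgm_weights_def by simp

lemma normalized_in_wgm_weights:
  assumes r_sum: "(\<Sum>k\<in>{1..n}. r k) = 1" and q: "\<forall>k\<in>{1..n}. 0 < q k"
  shows "(\<lambda>k. q k / (\<Prod>j\<in>{1..n}. q j powr r j)) \<in> wgm_weights r n"
proof -
  define P where "P = (\<Prod>j\<in>{1..n}. q j powr r j)"
  have P: "0 < P" unfolding P_def using q by (intro prod_pos) force
  have "(\<Prod>k\<in>{1..n}. (q k / P) powr r k) = (\<Prod>k\<in>{1..n}. q k powr r k / P powr r k)"
    using P q by (intro prod.cong) (auto simp: powr_divide)
  also have "\<dots> = P / (\<Prod>k\<in>{1..n}. P powr r k)" by (simp add: prod_dividef P_def)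
  also have "(\<Prod>k\<in>{1..n}. P powr r k) = P powr (\<Sum>k\<in>{1..n}. r k)"
    using P by (simp add: powr_sum)
  also have "\<dots> = P" using r_sum P by simp
  finally show ?thesis using P q unfolding wgm_weights_def P_def by auto
qed

text \<open>The weighted AM-GM inequality, via \<open>ln x \<le> x - 1\<close>.\<close>
lemma wgm_weights_sum_ge_one:
  assumes r_nonneg: "\<forall>k\<in>{1..n}. 0 \<le> r k" and r_sum: "(\<Sum>k\<in>{1..n}. r k) = 1"
    and \<theta>: "\<theta> \<in> wgm_weights r n"
  shows "1 \<le> (\<Sum>k\<in>{1..n}. r k * \<theta> k)"
proof -
  have pos: "\<forall>k\<in>{1..n}. 0 < \<theta> k" and prod: "(\<Prod>k\<in>{1..n}. \<theta> k powr r k) = 1"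
    using \<theta> unfolding wgm_weights_def by auto
  have "0 = ln (\<Prod>k\<in>{1..n}. \<theta> k powr r k)" using prod by simp
  also have "\<dots> = (\<Sum>k\<in>{1..n}. ln (\<theta> k powr r k))"
    using pos by (intro ln_prod) force+
  also have "\<dots> = (\<Sum>k\<in>{1..n}. r k * ln (\<theta> k))" by simp
  also have "\<dots> \<le> (\<Sum>k\<in>{1..n}. r k * (\<theta> k - 1))"
    using pos r_nonneg by (intro sum_mono mult_left_mono ln_le_minus_one) auto
  also have "\<dots> = (\<Sum>k\<in>{1..n}. r k * \<theta> k) - 1"
    using r_sum by (simp add: algebra_simps sum_subtractf)
  finally show ?thesis by simp
qed

text \<open>
  Truncating the weights of \<open>\<phi>\<close> at a level \<open>M\<close> and raising them to at least \<open>c\<close> does not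
  bring the weighted geometric mean below \<open>1\<close>: a single weight above \<open>M\<close> already compensates
  for all the others being as small as \<open>c\<close>.\<close>
lemma prod_powr_ge_one_of_truncation:
  assumes r_pos: "\<forall>k\<in>{1..n}. 0 < r k" and r_sum: "(\<Sum>k\<in>{1..n}. r k) = 1"
    and \<phi>: "\<phi> \<in> wgm_weights r n" and c: "0 < c" "c \<le> 1"
    and M: "\<forall>k\<in>{1..n}. (1/c) powr (1 / r k) \<le> M"
    and q: "\<forall>k\<in>{1..n}. min (\<phi> k) M \<le> q k \<and> c \<le> q k"
  shows "1 \<le> (\<Prod>k\<in>{1..n}. q k powr r k)"
proof (cases "\<forall>k\<in>{1..n}. \<phi> k \<le> M")
  case True
  have "1 = (\<Prod>k\<in>{1..n}. \<phi> k powr r k)" using \<phi> unfolding wgm_weights_def by simp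
  also have "\<dots> \<le> (\<Prod>k\<in>{1..n}. q k powr r k)"
    using True q r_pos \<phi> unfolding wgm_weights_def
    by (intro prod_mono) (auto intro!: powr_mono2 simp: less_imp_le min_def)
  finally show ?thesis .
next
  case False
  then obtain i where i: "i \<in> {1..n}" "M < \<phi> i" by auto
  have ri: "0 < r i" using r_pos i(1) by blast
  have M_nonneg: "0 \<le> M" using M i(1) by (auto intro: order_trans[OF powr_ge_zero])
  have M_le_qi: "M \<le> q i" using q i by (metis min.absorb2 less_imp_le)
  have "1/c \<le> M powr r i"
  proof -
    have "((1/c) powr (1 / r i)) powr r i \<le> M powr r i"
      using M i(1) ri c by (intro powr_mono2) auto
    then show ?thesis using ri c by (simp add: powr_powr)
  qed
  moreover have "c \<le> (\<Prod>k\<in>{1..n}-{i}. c powr r k)"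
  proof -
    have "c powr 1 \<le> c powr (1 - r i)" using c ri by (intro powr_mono') auto
    also have "1 - r i = (\<Sum>k\<in>{1..n}-{i}. r k)" using r_sum i(1) by (simp add: sum_diff1)
    finally show ?thesis using c by (simp add: powr_sum)
  qed
  ultimately have "(1/c) * c \<le> M powr r i * (\<Prod>k\<in>{1..n}-{i}. c powr r k)"
    using c by (intro mult_mono) auto
  then have "1 \<le> M powr r i * (\<Prod>k\<in>{1..n}-{i}. c powr r k)"
    using c by simp
  also have "\<dots> \<le> q i powr r i * (\<Prod>k\<in>{1..n}-{i}. q k powr r k)"
  proof (intro mult_mono prod_mono conjI)
    show "M powr r i \<le> q i powr r i"
      using M_nonneg M_le_qi ri by (intro powr_mono2) auto
    show "c powr r k \<le> q k powr r k" if "k \<in> {1..n} - {i}" for k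
      using that q c r_pos by (intro powr_mono2) (auto simp: less_imp_le)
  qed (auto intro: prod_nonneg)
  also have "\<dots> = (\<Prod>k\<in>{1..n}. q k powr r k)" using i(1) by (simp add: prod.remove)
  finally show ?thesis .
qed


text \<open>
  A finite \<open>c\<close>-net of weights from above: round each coordinate, truncated at \<open>M\<close>, up to the
  grid \<open>c\<nat>\<close>, then normalise.  Normalising only decreases the coordinates, by the previous lemma.\<close>
lemma wgm_weights_finite_net:
  assumes r_pos: "\<forall>k\<in>{1..n}. 0 < r k" and r_sum: "(\<Sum>k\<in>{1..n}. r k) = 1"
    and c: "0 < c" "c \<le> 1"
  obtains \<Theta> where "finite \<Theta>" "\<Theta> \<subseteq> wgm_weights r n"
    "\<forall>\<phi>\<in>wgm_weights r n. \<exists>\<theta>\<in>\<Theta>. \<forall>k\<in>{1..n}. \<theta> k \<le> \<phi> k + c"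
proof
  define M where "M = (\<Sum>k\<in>{1..n}. (1/c) powr (1 / r k))"
  define N where "N = nat \<lceil>M / c\<rceil>"
  define Q where "Q = PiE {1..n} (\<lambda>_. (\<lambda>j. c * real j) ` {1..N})"
  define normalize where "normalize = (\<lambda>q::nat\<Rightarrow>real. \<lambda>k. q k / (\<Prod>j\<in>{1..n}. q j powr r j))"
  have M: "\<forall>k\<in>{1..n}. (1/c) powr (1 / r k) \<le> M" unfolding M_def by (auto intro: member_le_sum)
  have M_pos: "0 < M" if "k \<in> {1..n}" for k
    using M that c less_le_trans[of 0 "(1/c) powr (1 / r k)" M] by simp
  show "finite (normalize ` Q)" unfolding Q_def by (intro finite_imageI finite_PiE) auto
  have "\<forall>k\<in>{1..n}. 0 < q k" if "q \<in> Q" for q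
    using that c unfolding Q_def by (auto simp: PiE_def Pi_def)
  then show "normalize ` Q \<subseteq> wgm_weights r n"
    unfolding normalize_def using normalized_in_wgm_weights[OF r_sum] by blast
  show "\<forall>\<phi>\<in>wgm_weights r n. \<exists>\<theta>\<in>normalize ` Q. \<forall>k\<in>{1..n}. \<theta> k \<le> \<phi> k + c"
  proof
    fix \<phi> assume \<phi>: "\<phi> \<in> wgm_weights r n"
    define j where "j = (\<lambda>k. nat \<lceil>min (\<phi> k) M / c\<rceil>)"
    define q where "q = restrict (\<lambda>k. c * real (j k)) {1..n}"
    have bounds: "1 \<le> j k \<and> j k \<le> N \<and> min (\<phi> k) M \<le> q k \<and> q k \<le> \<phi> k + c \<and> c \<le> q k"
      if k: "k \<in> {1..n}" for k
    proof -
      have pos: "0 < min (\<phi> k) M / c" using \<phi> k M_pos[OF k] c unfolding wgm_weights_def by auto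
      have "min (\<phi> k) M / c \<le> M / c" using c by (intro divide_right_mono) auto
      then have "j k \<le> N" unfolding j_def N_def by (intro nat_mono ceiling_mono)
      moreover have j1: "1 \<le> j k" using pos unfolding j_def by linarith
      moreover have "min (\<phi> k) M / c \<le> real (j k)" "real (j k) < min (\<phi> k) M / c + 1"
        using pos unfolding j_def by linarith+
      moreover have "c * 1 \<le> c * real (j k)" using j1 c by (intro mult_left_mono) auto
      ultimately show ?thesis using c k unfolding q_def by (auto simp: field_simps)
    qed
    have "q \<in> Q" unfolding Q_def q_def using bounds by auto
    have P: "1 \<le> (\<Prod>k\<in>{1..n}. q k powr r k)"
      using bounds by (intro prod_powr_ge_one_of_truncation[OF r_pos r_sum \<phi> c M]) blast
    have "normalize q k \<le> \<phi> k + c" if k: "k \<in> {1..n}" for k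
    proof -
      have "normalize q k \<le> q k / 1"
        unfolding normalize_def using P bounds[OF k] c by (intro divide_left_mono) auto
      then show ?thesis using bounds[OF k] by simp
    qed
    then show "\<exists>\<theta>\<in>normalize ` Q. \<forall>k\<in>{1..n}. \<theta> k \<le> \<phi> k + c" using \<open>q \<in> Q\<close> by blast
  qed
qed


definition wgm_sum :: "(nat \<Rightarrow> 'a::real_vector_lattice) \<Rightarrow> (nat \<Rightarrow> real) \<Rightarrow> nat \<Rightarrow> (nat \<Rightarrow> real) \<Rightarrow> 'a"
  where "wgm_sum f r n \<theta> = (\<Sum>k\<in>{1..n}. (r k * \<theta> k) *\<^sub>R vabs (f k))"

lemma wgm_set_R_eq_image: "wgm_set_R f r n = wgm_sum f r n ` wgm_weights r n"
  unfolding wgm_set_R_def wgm_sum_def wgm_weights_def by auto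

lemma is_inf_unique: "is_inf S x \<Longrightarrow> is_inf S y \<Longrightarrow> x = (y::'a::order)"
  unfolding is_inf_def by (meson order.antisym)

lemma wgm_R_eqI: "is_inf (wgm_set_R f r n) x \<Longrightarrow> wgm_R f r n = x"
  unfolding wgm_R_def using is_inf_unique by blast

lemma wgm_closed_R_is_inf:
  assumes "wgm_closed_R TYPE('a::archimedean_real_vector_lattice)"
    and "\<forall>k\<in>{1..n}. 0 < r k \<and> r k < 1" "(\<Sum>k\<in>{1..n}. r k) = 1"
  shows "is_inf (wgm_set_R (f :: nat \<Rightarrow> 'a) r n) (wgm_R f r n)"
proof -
  obtain x where "is_inf (wgm_set_R f r n) x" using assms unfolding wgm_closed_R_def by blast
  then show ?thesis using wgm_R_eqI by metis
qed

lemma is_inf_wgm_set_R_const: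
  assumes "\<forall>k\<in>{1..n}. 0 \<le> r k" "(\<Sum>k\<in>{1..n}. r k) = 1"
  shows "is_inf (wgm_set_R (\<lambda>_. x) r n) (vabs (x::'a::real_vector_lattice))"
proof -
  have sum_const: "wgm_sum (\<lambda>_. x) r n \<theta> = (\<Sum>k\<in>{1..n}. r k * \<theta> k) *\<^sub>R vabs x" for \<theta>
    unfolding wgm_sum_def by (simp add: scaleR_sum_left)
  have "vabs x \<le> wgm_sum (\<lambda>_. x) r n \<theta>" if "\<theta> \<in> wgm_weights r n" for \<theta>
    using wgm_weights_sum_ge_one[OF assms that] vabs_nonneg scaleR_right_mono
    unfolding sum_const by (metis scaleR_one)
  moreover have "vabs x = wgm_sum (\<lambda>_. x) r n (\<lambda>_. 1)"
    unfolding sum_const using assms(2) by simp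
  ultimately show ?thesis
    unfolding is_inf_def wgm_set_R_eq_image using const_one_in_wgm_weights by fastforce
qed

lemma wgm_R_const:
  "\<forall>k\<in>{1..n}. 0 \<le> r k \<Longrightarrow> (\<Sum>k\<in>{1..n}. r k) = 1 \<Longrightarrow> wgm_R (\<lambda>_. x) r n = vabs x"
  by (intro wgm_R_eqI is_inf_wgm_set_R_const)

lemma is_inf_wgm_set_R_nonneg:
  assumes "is_inf (wgm_set_R f r n) w" "\<forall>k\<in>{1..n}. 0 \<le> r k"
  shows "0 \<le> w"
proof -
  have "0 \<le> wgm_sum f r n \<theta>" if "\<theta> \<in> wgm_weights r n" for \<theta>
    using assms(2) that unfolding wgm_sum_def wgm_weights_def
    by (intro sum_nonneg scaleR_nonneg_nonneg vabs_nonneg mult_nonneg_nonneg) (auto simp: less_imp_le)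
  then show ?thesis using assms(1) unfolding is_inf_def wgm_set_R_eq_image by blast
qed

section \<open>Sublattices and lattice homomorphisms\<close>

lemma sublattice_R_UNIV: "sublattice_R UNIV"
  unfolding sublattice_R_def by simp

lemma sublattice_R_zero: "sublattice_R G \<Longrightarrow> 0 \<in> G"
  and sublattice_R_add: "sublattice_R G \<Longrightarrow> x \<in> G \<Longrightarrow> y \<in> G \<Longrightarrow> x + y \<in> G"
  and sublattice_R_scaleR: "sublattice_R G \<Longrightarrow> x \<in> G \<Longrightarrow> c *\<^sub>R x \<in> G"
  and sublattice_R_vabs: "sublattice_R G \<Longrightarrow> x \<in> G \<Longrightarrow> vabs x \<in> G"
  unfolding sublattice_R_def by blast+

lemma sublattice_R_diff: "sublattice_R G \<Longrightarrow> x \<in> G \<Longrightarrow> y \<in> G \<Longrightarrow> x - y \<in> G"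
  using sublattice_R_add sublattice_R_scaleR[of G y "-1"] by fastforce

lemma sublattice_R_sum:
  "sublattice_R G \<Longrightarrow> (\<And>i. i \<in> A \<Longrightarrow> g i \<in> G) \<Longrightarrow> (\<Sum>i\<in>A. g i) \<in> G"
  by (induction A rule: infinite_finite_induct) (auto intro: sublattice_R_zero sublattice_R_add)

lemma sublattice_R_pprt: "sublattice_R G \<Longrightarrow> x \<in> G \<Longrightarrow> pprt x \<in> G"
  unfolding pprt_eq_half_vabs_add by (intro sublattice_R_scaleR sublattice_R_add sublattice_R_vabs)

lemma sublattice_R_inf: "sublattice_R G \<Longrightarrow> x \<in> G \<Longrightarrow> y \<in> G \<Longrightarrow> inf x y \<in> G"
  unfolding inf_eq_diff_pprt by (intro sublattice_R_diff sublattice_R_pprt)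

lemma sublattice_R_Inf_fin:
  assumes "sublattice_R G" "finite A" "A \<noteq> {}" "A \<subseteq> G"
  shows "Inf_fin A \<in> G"
  using assms(2-4) by (induction A rule: finite_ne_induct) (auto intro: sublattice_R_inf[OF assms(1)])

lemma sublattice_R_wgm_sum:
  "sublattice_R G \<Longrightarrow> \<forall>k\<in>{1..n}. f k \<in> G \<Longrightarrow> wgm_sum f r n \<theta> \<in> G"
  unfolding wgm_sum_def by (auto intro!: sublattice_R_sum sublattice_R_scaleR sublattice_R_vabs)

lemma linear_on_R_UNIV: "linear T \<Longrightarrow> linear_on_R UNIV T"
  unfolding linear_on_R_def linear_iff by blast

lemma linear_on_R_add: "linear_on_R G S \<Longrightarrow> x \<in> G \<Longrightarrow> y \<in> G \<Longrightarrow> S (x + y) = S x + S y"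
  and linear_on_R_scaleR: "linear_on_R G S \<Longrightarrow> x \<in> G \<Longrightarrow> S (c *\<^sub>R x) = c *\<^sub>R S x"
  unfolding linear_on_R_def by blast+

lemma linear_on_R_diff:
  assumes "linear_on_R G S" "sublattice_R G" "x \<in> G" "y \<in> G"
  shows "S (x - y) = S x - S y"
proof -
  have "S x = S ((x - y) + y)" by simp
  also have "\<dots> = S (x - y) + S y"
    using assms by (intro linear_on_R_add) (auto intro: sublattice_R_diff)
  finally show ?thesis by (simp add: algebra_simps)
qed

lemma linear_on_R_sum:
  assumes "linear_on_R G S" "sublattice_R G" "\<And>i. i \<in> A \<Longrightarrow> g i \<in> G"
  shows "S (\<Sum>i\<in>A. g i) = (\<Sum>i\<in>A. S (g i))"
  using assms(3)
proof (induction A rule: infinite_finite_induct)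
  case (infinite A)
  then show ?case
    using linear_on_R_scaleR[OF assms(1) sublattice_R_zero[OF assms(2)], of 0] by simp
next
  case empty
  then show ?case
    using linear_on_R_scaleR[OF assms(1) sublattice_R_zero[OF assms(2)], of 0] by simp
next
  case (insert x F)
  then show ?case
    using assms(1,2) by (simp add: linear_on_R_add sublattice_R_sum)
qed

lemma linear_on_R_wgm_sum:
  assumes "linear_on_R G S" "sublattice_R G" "\<forall>k\<in>{1..n}. f k \<in> G"
    and "\<forall>k\<in>{1..n}. vabs (h k) = S (vabs (f k))"
  shows "S (wgm_sum f r n \<theta>) = wgm_sum h r n \<theta>"
proof -
  have "S (wgm_sum f r n \<theta>) = (\<Sum>k\<in>{1..n}. S ((r k * \<theta> k) *\<^sub>R vabs (f k)))"
    unfolding wgm_sum_def using assms(1-3)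
    by (intro linear_on_R_sum) (auto intro!: sublattice_R_scaleR sublattice_R_vabs)
  also have "\<dots> = wgm_sum h r n \<theta>"
    unfolding wgm_sum_def using assms
    by (intro sum.cong) (simp_all add: linear_on_R_scaleR sublattice_R_vabs)
  finally show ?thesis .
qed

lemma vl_hom_on_R_pprt:
  assumes "sublattice_R G" "linear_on_R G S" "vl_hom_on_R G S" "x \<in> G"
  shows "S (pprt x) = pprt (S x)"
  using assms unfolding pprt_eq_half_vabs_add vl_hom_on_R_def
  by (simp add: linear_on_R_scaleR linear_on_R_add sublattice_R_add sublattice_R_vabs)

lemma vl_hom_on_R_inf:
  assumes "sublattice_R G" "linear_on_R G S" "vl_hom_on_R G S" "x \<in> G" "y \<in> G"
  shows "S (inf x y) = inf (S x) (S y)"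
  using assms unfolding inf_eq_diff_pprt
  by (simp add: linear_on_R_diff vl_hom_on_R_pprt sublattice_R_diff sublattice_R_pprt)

lemma vl_hom_on_R_mono:
  assumes "sublattice_R G" "linear_on_R G S" "vl_hom_on_R G S" "x \<in> G" "y \<in> G" "x \<le> y"
  shows "S x \<le> S y"
proof -
  have "S (y - x) = vabs (S (y - x))"
    using assms by (simp add: vl_hom_on_R_def vabs_of_nonneg sublattice_R_diff)
  then have "0 \<le> S y - S x"
    using assms by (metis vabs_nonneg linear_on_R_diff)
  then show ?thesis by simp
qed

lemma vl_hom_on_R_Inf_fin:
  assumes "sublattice_R G" "linear_on_R G S" "vl_hom_on_R G S"
    and "finite A" "A \<noteq> {}" "A \<subseteq> G"
  shows "S (Inf_fin A) = Inf_fin (S ` A)"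
  using assms(4-6)
proof (induction A rule: finite_ne_induct)
  case (insert x F)
  then show ?case
    using assms(1-3) by (simp add: vl_hom_on_R_inf sublattice_R_Inf_fin)
qed simp


lemma wgm_inf_transfer_le:
  assumes G: "sublattice_R G" "linear_on_R G S"
    and mono: "\<And>x y. x \<in> G \<Longrightarrow> y \<in> G \<Longrightarrow> x \<le> y \<Longrightarrow> S x \<le> S y"
    and f: "\<forall>k\<in>{1..n}. f k \<in> G" and w: "is_inf (wgm_set_R f r n) w" "w \<in> G"
    and v: "is_inf (wgm_set_R h r n) v" and h: "\<forall>k\<in>{1..n}. vabs (h k) = S (vabs (f k))"
  shows "S w \<le> v"
proof -
  have "S w \<le> wgm_sum h r n \<theta>" if "\<theta> \<in> wgm_weights r n" for \<theta>
  proof -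
    have "w \<le> wgm_sum f r n \<theta>" using w(1) that unfolding is_inf_def wgm_set_R_eq_image by blast
    then have "S w \<le> S (wgm_sum f r n \<theta>)" using mono w(2) sublattice_R_wgm_sum[OF G(1) f] by blast
    then show ?thesis using linear_on_R_wgm_sum[OF G(2,1) f h] by simp
  qed
  then show ?thesis using v unfolding is_inf_def wgm_set_R_eq_image by blast
qed

lemma Inf_fin_wgm_sum_net_le:
  assumes r: "\<forall>k\<in>{1..n}. 0 \<le> r k \<and> r k \<le> 1" and c: "0 \<le> c"
    and \<Theta>: "finite \<Theta>" "\<forall>\<phi>\<in>wgm_weights r n. \<exists>\<theta>\<in>\<Theta>. \<forall>k\<in>{1..n}. \<theta> k \<le> \<phi> k + c"
    and w: "is_inf (wgm_set_R f r n) w"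
  shows "Inf_fin (wgm_sum f r n ` \<Theta>) \<le> w + c *\<^sub>R (\<Sum>k\<in>{1..n}. vabs (f k))"
proof -
  have "Inf_fin (wgm_sum f r n ` \<Theta>) - c *\<^sub>R (\<Sum>k\<in>{1..n}. vabs (f k)) \<le> wgm_sum f r n \<phi>"
    if \<phi>: "\<phi> \<in> wgm_weights r n" for \<phi>
  proof -
    obtain \<theta> where \<theta>: "\<theta> \<in> \<Theta>" "\<forall>k\<in>{1..n}. \<theta> k \<le> \<phi> k + c" using \<Theta>(2) \<phi> by blast
    have "Inf_fin (wgm_sum f r n ` \<Theta>) \<le> wgm_sum f r n \<theta>"
      using \<Theta>(1) \<theta>(1) by (intro Inf_fin.coboundedI) auto
    also have "\<dots> \<le> (\<Sum>k\<in>{1..n}. (r k * \<phi> k + c) *\<^sub>R vabs (f k))"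
      unfolding wgm_sum_def
    proof (intro sum_mono scaleR_right_mono vabs_nonneg)
      fix k assume k: "k \<in> {1..n}"
      have "r k * \<theta> k \<le> r k * (\<phi> k + c)" using \<theta>(2) r k by (intro mult_left_mono) auto
      also have "\<dots> \<le> r k * \<phi> k + c"
        using mult_left_le_one_le[of c "r k"] r k c by (simp add: algebra_simps)
      finally show "r k * \<theta> k \<le> r k * \<phi> k + c" .
    qed
    also have "\<dots> = wgm_sum f r n \<phi> + c *\<^sub>R (\<Sum>k\<in>{1..n}. vabs (f k))"
      unfolding wgm_sum_def by (simp add: scaleR_add_left sum.distrib scaleR_sum_right)
    finally show ?thesis by (simp add: algebra_simps)
  qed
  then have "Inf_fin (wgm_sum f r n ` \<Theta>) - c *\<^sub>R (\<Sum>k\<in>{1..n}. vabs (f k)) \<le> w"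
    using w unfolding is_inf_def wgm_set_R_eq_image by blast
  then show ?thesis by (simp add: algebra_simps)
qed

lemma wgm_inf_transfer_eq:
  fixes S :: "'a::real_vector_lattice \<Rightarrow> 'b::archimedean_real_vector_lattice"
  assumes r_range: "\<forall>k\<in>{1..n}. 0 < r k \<and> r k < 1" and r_sum: "(\<Sum>k\<in>{1..n}. r k) = 1"
    and G: "sublattice_R G" "linear_on_R G S" "vl_hom_on_R G S"
    and f: "\<forall>k\<in>{1..n}. f k \<in> G" and w: "is_inf (wgm_set_R f r n) w" "w \<in> G"
    and v: "is_inf (wgm_set_R h r n) v" and h: "\<forall>k\<in>{1..n}. vabs (h k) = S (vabs (f k))"
  shows "S w = v"
proof (rule order.antisym)
  have mono: "\<And>x y. x \<in> G \<Longrightarrow> y \<in> G \<Longrightarrow> x \<le> y \<Longrightarrow> S x \<le> S y"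
    using vl_hom_on_R_mono[OF G] by blast
  show "S w \<le> v" using wgm_inf_transfer_le[OF G(1,2) mono f w v h] .
  define u where "u = (\<Sum>k\<in>{1..n}. vabs (f k))"
  have u: "u \<in> G" unfolding u_def using G(1) f by (intro sublattice_R_sum sublattice_R_vabs) auto
  have "v - S w \<le> c *\<^sub>R S u" if c: "0 < c" "c \<le> 1" for c
  proof -
    obtain \<Theta> where \<Theta>: "finite \<Theta>" "\<Theta> \<subseteq> wgm_weights r n"
      "\<forall>\<phi>\<in>wgm_weights r n. \<exists>\<theta>\<in>\<Theta>. \<forall>k\<in>{1..n}. \<theta> k \<le> \<phi> k + c"
      using wgm_weights_finite_net[OF _ r_sum c] r_range by blast
    define A where "A = wgm_sum f r n ` \<Theta>"
    have A: "finite A" "A \<noteq> {}" "A \<subseteq> G"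
      using \<Theta> const_one_in_wgm_weights sublattice_R_wgm_sum[OF G(1) f] unfolding A_def by auto
    have "v \<le> Inf_fin (S ` A)"
    proof (rule Inf_fin.boundedI)
      fix b assume "b \<in> S ` A"
      then obtain \<theta> where "\<theta> \<in> wgm_weights r n" "b = wgm_sum h r n \<theta>"
        using \<Theta>(2) linear_on_R_wgm_sum[OF G(2,1) f h] unfolding A_def by auto
      then show "v \<le> b" using v unfolding is_inf_def wgm_set_R_eq_image by blast
    qed (use A in auto)
    also have "\<dots> = S (Inf_fin A)" using vl_hom_on_R_Inf_fin[OF G A] by simp
    also have "\<dots> \<le> S (w + c *\<^sub>R u)"
    proof (rule mono)
      show "Inf_fin A \<le> w + c *\<^sub>R u"
        unfolding A_def u_def using r_range c
        by (intro Inf_fin_wgm_sum_net_le[OF _ _ \<Theta>(1,3) w(1)]) auto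
    qed (use G(1) A u w(2) in \<open>auto intro: sublattice_R_Inf_fin sublattice_R_add sublattice_R_scaleR\<close>)
    also have "\<dots> = S w + c *\<^sub>R S u"
      using G(1,2) w(2) u by (simp add: linear_on_R_add linear_on_R_scaleR sublattice_R_scaleR)
    finally show ?thesis by (simp add: algebra_simps)
  qed
  moreover have "0 \<le> S u"
    using mono[OF sublattice_R_zero[OF G(1)] u] linear_on_R_scaleR[OF G(2) sublattice_R_zero[OF G(1)], of 0]
    unfolding u_def by (simp add: sum_nonneg vabs_nonneg)
  ultimately have "v - S w \<le> 0" by (rule archimedean_nonpos[rotated])
  then show "v \<le> S w" by simp
qed


section \<open>The real case\<close>

lemma positive_map_R_mono:
  assumes "linear T" "positive_map_R T" "x \<le> y"
  shows "T x \<le> T y"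
proof -
  have "0 \<le> T (y - x)" using assms(2,3) unfolding positive_map_R_def by (simp add: pos_R_iff)
  then show ?thesis using assms(1) by (simp add: linear_diff)
qed

lemma positive_map_wgm_R_le:
  fixes T :: "'a::archimedean_real_vector_lattice \<Rightarrow> 'b::archimedean_real_vector_lattice"
  assumes closed: "wgm_closed_R TYPE('a)" "wgm_closed_R TYPE('b)"
    and r_range: "\<forall>k\<in>{1..n}. 0 < r k \<and> r k < 1" and r_sum: "(\<Sum>k\<in>{1..n}. r k) = 1"
    and T: "linear T" "positive_map_R T"
  shows "T (wgm_R f r n) \<le> wgm_R (\<lambda>k. T (vabs (f k))) r n"
proof (rule wgm_inf_transfer_le[OF sublattice_R_UNIV linear_on_R_UNIV[OF T(1)]])
  show "\<forall>k\<in>{1..n}. vabs (T (vabs (f k))) = T (vabs (f k))"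
    using T(2) vabs_nonneg unfolding positive_map_R_def pos_R_iff by (blast intro: vabs_of_nonneg)
qed (use positive_map_R_mono[OF T] wgm_closed_R_is_inf[OF _ r_range r_sum] closed in auto)

lemma vl_hom_on_R_wgm_R:
  fixes T :: "'a::archimedean_real_vector_lattice \<Rightarrow> 'b::archimedean_real_vector_lattice"
  assumes closed: "wgm_closed_R TYPE('a)" "wgm_closed_R TYPE('b)"
    and r_range: "\<forall>k\<in>{1..n}. 0 < r k \<and> r k < 1" and r_sum: "(\<Sum>k\<in>{1..n}. r k) = 1"
    and G: "sublattice_R G" "linear_on_R G T" "vl_hom_on_R G T"
    and f: "\<forall>k\<in>{1..n}. f k \<in> G" and wgm_in_G: "wgm_R f r n \<in> G"
  shows "T (wgm_R f r n) = wgm_R (\<lambda>k. T (f k)) r n"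
proof (rule wgm_inf_transfer_eq[OF r_range r_sum G f _ wgm_in_G])
  show "\<forall>k\<in>{1..n}. vabs (T (f k)) = T (vabs (f k))" using G(3) f unfolding vl_hom_on_R_def by blast
qed (intro wgm_closed_R_is_inf[OF _ r_range r_sum] closed)+

lemma vl_hom_iff_wgm_R:
  fixes T :: "'a::archimedean_real_vector_lattice \<Rightarrow> 'b::archimedean_real_vector_lattice"
  assumes closed: "wgm_closed_R TYPE('a)" "wgm_closed_R TYPE('b)"
    and r_range: "\<forall>k\<in>{1..n}. 0 < r k \<and> r k < 1" and r_sum: "(\<Sum>k\<in>{1..n}. r k) = 1"
    and T: "linear T"
  shows "vl_hom_on_R UNIV T \<longleftrightarrow> (\<forall>f. T (wgm_R f r n) = wgm_R (\<lambda>k. T (f k)) r n)"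
proof
  assume "vl_hom_on_R UNIV T"
  then show "\<forall>f. T (wgm_R f r n) = wgm_R (\<lambda>k. T (f k)) r n"
    using vl_hom_on_R_wgm_R[OF closed r_range r_sum sublattice_R_UNIV linear_on_R_UNIV[OF T]] by simp
next
  assume "\<forall>f. T (wgm_R f r n) = wgm_R (\<lambda>k. T (f k)) r n"
  then have "T (wgm_R (\<lambda>_. x) r n) = wgm_R (\<lambda>_. T x) r n" for x by blast
  moreover have "wgm_R (\<lambda>_. x) r n = vabs x" "wgm_R (\<lambda>_. T x) r n = vabs (T x)" for x
    using r_range r_sum by (intro wgm_R_const; auto)+
  ultimately show "vl_hom_on_R UNIV T" unfolding vl_hom_on_R_def by simp
qed


section \<open>The complex case\<close>

definition circle_combinations :: "'a::real_vector \<times> 'a \<Rightarrow> 'a set" where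
  "circle_combinations z = {cos \<theta> *\<^sub>R fst z + sin \<theta> *\<^sub>R snd z | \<theta>. \<theta> \<in> {0..2*pi}}"

lemma is_sup_unique: "is_sup S x \<Longrightarrow> is_sup S y \<Longrightarrow> x = (y::'a::order)"
  unfolding is_sup_def by (meson order.antisym)

lemma cabs_re_eqI: "is_sup (circle_combinations z) x \<Longrightarrow> cabs_re z = x"
  unfolding cabs_re_def circle_combinations_def[symmetric] using is_sup_unique by blast

lemma is_sup_cabs_re:
  assumes "square_mean_closed TYPE('a::real_vector_lattice)"
  shows "is_sup (circle_combinations (z::'a \<times> 'a)) (cabs_re z)"
proof -
  obtain s where "is_sup (circle_combinations z) s"
    using assms unfolding square_mean_closed_def circle_combinations_def by blast
  then show ?thesis using cabs_re_eqI by metis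
qed

lemma fst_in_circle_combinations: "fst z \<in> circle_combinations z" "- fst z \<in> circle_combinations z"
proof -
  have "fst z = cos 0 *\<^sub>R fst z + sin 0 *\<^sub>R snd z" "- fst z = cos pi *\<^sub>R fst z + sin pi *\<^sub>R snd z"
    by simp_all
  then show "fst z \<in> circle_combinations z" "- fst z \<in> circle_combinations z"
    unfolding circle_combinations_def by (force, fastforce)
qed

lemma cabs_re_nonneg:
  assumes "square_mean_closed TYPE('a::real_vector_lattice)"
  shows "0 \<le> cabs_re (z::'a \<times> 'a)"
proof -
  have "vabs (fst z) \<le> cabs_re z"
    using is_sup_cabs_re[OF assms, of z] fst_in_circle_combinations[of z]
    unfolding is_sup_def vabs_def by simp
  then show ?thesis using vabs_nonneg order_trans by blast
qed

lemma cabs_re_real: "cabs_re (x, 0) = vabs (x::'a::real_vector_lattice)"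
proof (rule cabs_re_eqI)
  have "s \<le> vabs x" if "s \<in> circle_combinations (x, 0)" for s
    using that scaleR_le_vabs[of _ x] unfolding circle_combinations_def by auto
  moreover have "vabs x \<le> y" if "\<forall>s\<in>circle_combinations (x, 0). s \<le> y" for y
    using that fst_in_circle_combinations[of "(x, 0)"] unfolding vabs_def by simp
  ultimately show "is_sup (circle_combinations (x, 0)) (vabs x)" unfolding is_sup_def by blast
qed

lemma cvabs_real: "cvabs (x, 0) = (vabs (x::'a::real_vector_lattice), 0)"
  by (simp add: cvabs_def cabs_re_real)

lemma pos_C_iff: "pos_C (z::'a::real_vector_lattice \<times> 'a) \<longleftrightarrow> snd z = 0 \<and> 0 \<le> fst z"
  by (cases z) (auto simp: pos_C_def cvabs_def cabs_re_real vabs_eq_self_iff)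

lemma wgm_set_C_eq:
  assumes "square_mean_closed TYPE('a::real_vector_lattice)"
  shows "wgm_set_C (f :: nat \<Rightarrow> 'a \<times> 'a) r n = wgm_set_R (\<lambda>k. cabs_re (f k)) r n"
  unfolding wgm_set_C_def wgm_set_R_def using vabs_of_nonneg[OF cabs_re_nonneg[OF assms]] by simp

lemma wgm_C_eq:
  assumes "square_mean_closed TYPE('a::real_vector_lattice)"
  shows "wgm_C (f :: nat \<Rightarrow> 'a \<times> 'a) r n = (wgm_R (\<lambda>k. cabs_re (f k)) r n, 0)"
  unfolding wgm_C_def wgm_R_def wgm_set_C_eq[OF assms] ..

lemma wgm_closed_C_is_inf:
  assumes "wgm_closed_C TYPE('a::archimedean_real_vector_lattice)"
    and "square_mean_closed TYPE('a)"
    and "\<forall>k\<in>{1..n}. 0 < r k \<and> r k < 1" "(\<Sum>k\<in>{1..n}. r k) = 1"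
  shows "is_inf (wgm_set_R (\<lambda>k. cabs_re (f k :: 'a \<times> 'a)) r n) (wgm_R (\<lambda>k. cabs_re (f k)) r n)"
proof -
  obtain x where "is_inf (wgm_set_C f r n) x" using assms unfolding wgm_closed_C_def by blast
  then show ?thesis using wgm_R_eqI unfolding wgm_set_C_eq[OF assms(2)] by metis
qed

lemma wgm_C_const:
  assumes "square_mean_closed TYPE('a::real_vector_lattice)"
    and "\<forall>k\<in>{1..n}. 0 \<le> r k" "(\<Sum>k\<in>{1..n}. r k) = 1"
  shows "wgm_C (\<lambda>_. z :: 'a \<times> 'a) r n = cvabs z"
  using assms by (simp add: wgm_C_eq wgm_R_const cvabs_def vabs_of_nonneg cabs_re_nonneg)


definition real_section :: "('a::zero \<times> 'a) set \<Rightarrow> 'a set" where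
  "real_section G = {x. (x, 0) \<in> G}"

definition real_restriction :: "('a::zero \<times> 'a \<Rightarrow> 'b \<times> 'b) \<Rightarrow> 'a \<Rightarrow> 'b" where
  "real_restriction T x = fst (T (x, 0))"

lemma real_section_UNIV: "real_section UNIV = UNIV"
  unfolding real_section_def by simp

lemma cscale_of_real: "cscale (complex_of_real c) (x, y) = (c *\<^sub>R x, c *\<^sub>R y)"
  unfolding cscale_def by simp

lemma sublattice_C_UNIV: "sublattice_C UNIV"
  unfolding sublattice_C_def by simp

lemma sublattice_R_real_section:
  assumes "sublattice_C G"
  shows "sublattice_R (real_section G)"
proof -
  have "(x, 0) + (y, 0) \<in> G" "cscale (complex_of_real c) (x, 0) \<in> G" "cvabs (x, 0) \<in> G"
    if "(x, 0) \<in> G" "(y, 0) \<in> G" for x y c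
    using assms that unfolding sublattice_C_def by blast+
  moreover have "(0, 0) \<in> G" using assms unfolding sublattice_C_def by (simp add: zero_prod_def)
  ultimately show ?thesis
    unfolding sublattice_R_def real_section_def by (auto simp: cscale_of_real cvabs_real)
qed

lemma linear_on_R_real_restriction:
  assumes "sublattice_C G" "clinear_on G T"
  shows "linear_on_R (real_section G) (real_restriction T)"
  unfolding linear_on_R_def real_section_def real_restriction_def
proof (intro conjI ballI allI)
  fix x y assume "x \<in> {x. (x, 0) \<in> G}" "y \<in> {x. (x, 0) \<in> G}"
  then show "fst (T (x + y, 0)) = fst (T (x, 0)) + fst (T (y, 0))"
    using assms(2)[unfolded clinear_on_def] by (metis add_Pair add.right_neutral fst_add mem_Collect_eq)
next
  fix c :: real and x assume "x \<in> {x. (x, 0) \<in> G}"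
  then have "T (cscale (complex_of_real c) (x, 0)) = cscale (complex_of_real c) (T (x, 0))"
    using assms(2) unfolding clinear_on_def by simp
  then show "fst (T (c *\<^sub>R x, 0)) = c *\<^sub>R fst (T (x, 0))" by (simp add: cscale_of_real cscale_def)
qed

text \<open>
  A lattice homomorphism maps positive real elements to positive real elements, hence by the
  decomposition \<open>x = x\<^sup>+ - (-x)\<^sup>+\<close> it maps the real section into the real section.\<close>
lemma vl_hom_on_C_real:
  assumes G: "sublattice_C G" "clinear_on G T" "vl_hom_on_C G T" and x: "x \<in> real_section G"
  shows "T (x, 0) = (real_restriction T x, 0)"
proof -
  have posreal: "snd (T (p, 0)) = 0" if "p \<in> real_section G" "0 \<le> p" for p
  proof -
    have "T (p, 0) = cvabs (T (p, 0))"
      using G(3) that unfolding vl_hom_on_C_def real_section_def by (simp add: cvabs_real vabs_of_nonneg)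
    then show ?thesis unfolding cvabs_def by (metis snd_conv)
  qed
  have parts: "pprt x \<in> real_section G" "pprt (- x) \<in> real_section G"
    using x sublattice_R_real_section[OF G(1)]
    by (auto intro: sublattice_R_pprt sublattice_R_scaleR[where c = "-1", simplified])
  have "(x, 0) = (pprt x, 0) + cscale (-1) (pprt (- x), 0)"
    using prts[of x] by (simp add: cscale_def pprt_neg)
  then have "T (x, 0) = T (pprt x, 0) + cscale (-1) (T (pprt (- x), 0))"
    using G(1,2) parts unfolding clinear_on_def sublattice_C_def real_section_def by auto
  then have "snd (T (x, 0)) = 0"
    using posreal parts by (simp add: cscale_def)
  then show ?thesis unfolding real_restriction_def by (metis prod.collapse)
qed

lemma vl_hom_on_R_real_restriction:
  assumes G: "sublattice_C G" "clinear_on G T" "vl_hom_on_C G T"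
  shows "vl_hom_on_R (real_section G) (real_restriction T)"
  unfolding vl_hom_on_R_def
proof
  fix x assume x: "x \<in> real_section G"
  have "real_restriction T (vabs x) = fst (T (cvabs (x, 0)))"
    unfolding real_restriction_def by (simp add: cvabs_real)
  also have "\<dots> = fst (cvabs (T (x, 0)))"
    using G(3) x unfolding vl_hom_on_C_def real_section_def by simp
  also have "\<dots> = vabs (real_restriction T x)"
    by (simp add: vl_hom_on_C_real[OF G x] cvabs_real)
  finally show "vabs (real_restriction T x) = real_restriction T (vabs x)" by simp
qed

lemma positive_map_C_real:
  assumes "positive_map_C T" "0 \<le> p"
  shows "T (p, 0) = (real_restriction T p, 0)" "0 \<le> real_restriction T p"
proof -
  have "pos_C (T (p, 0))" using assms unfolding positive_map_C_def by (simp add: pos_C_iff)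
  then show "T (p, 0) = (real_restriction T p, 0)" "0 \<le> real_restriction T p"
    unfolding pos_C_iff real_restriction_def by (auto simp: prod_eq_iff)
qed


lemma positive_map_wgm_C_le:
  fixes T :: "'a::archimedean_real_vector_lattice \<times> 'a \<Rightarrow> 'b::archimedean_real_vector_lattice \<times> 'b"
  assumes sm: "square_mean_closed TYPE('a)" "square_mean_closed TYPE('b)"
    and closed: "wgm_closed_C TYPE('a)" "wgm_closed_C TYPE('b)"
    and r_range: "\<forall>k\<in>{1..n}. 0 < r k \<and> r k < 1" and r_sum: "(\<Sum>k\<in>{1..n}. r k) = 1"
    and T: "clinear_on UNIV T" "positive_map_C T"
  shows "le_C (T (wgm_C f r n)) (wgm_C (\<lambda>k. T (cvabs (f k))) r n)"
proof -
  define S where "S = real_restriction T"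
  define g where "g = (\<lambda>k. cabs_re (f k))"
  define h where "h = (\<lambda>k. cabs_re (T (cvabs (f k))))"
  have S: "T (p, 0) = (S p, 0)" "0 \<le> S p" if "0 \<le> p" for p
    using positive_map_C_real[OF T(2) that] unfolding S_def by auto
  have lin: "linear_on_R UNIV S"
    using linear_on_R_real_restriction[OF sublattice_C_UNIV T(1)] by (simp add: S_def real_section_UNIV)
  have mono: "S x \<le> S y" if "x \<le> y" for x y
    using S(2)[of "y - x"] that linear_on_R_diff[OF lin sublattice_R_UNIV] by simp
  have g_nonneg: "0 \<le> g k" for k unfolding g_def by (rule cabs_re_nonneg[OF sm(1)])
  have h: "\<forall>k\<in>{1..n}. vabs (h k) = S (vabs (g k))"
    using S[OF g_nonneg] g_nonneg
    by (simp add: h_def g_def cvabs_def cabs_re_real vabs_of_nonneg)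
  have w: "is_inf (wgm_set_R g r n) (wgm_R g r n)"
    using wgm_closed_C_is_inf[OF closed(1) sm(1) r_range r_sum] unfolding g_def .
  have v: "is_inf (wgm_set_R h r n) (wgm_R h r n)"
    using wgm_closed_C_is_inf[OF closed(2) sm(2) r_range r_sum] unfolding h_def .
  have "S (wgm_R g r n) \<le> wgm_R h r n"
    using wgm_inf_transfer_le[OF sublattice_R_UNIV lin mono _ w _ v h] by simp
  moreover have "0 \<le> wgm_R g r n"
    using is_inf_wgm_set_R_nonneg[OF w] r_range by (simp add: less_imp_le)
  ultimately show ?thesis
    unfolding wgm_C_eq[OF sm(1)] wgm_C_eq[OF sm(2)] le_C_def pos_C_iff g_def h_def
    using S by simp
qed


lemma vl_hom_on_C_wgm_C:
  fixes T :: "'a::archimedean_real_vector_lattice \<times> 'a \<Rightarrow> 'b::archimedean_real_vector_lattice \<times> 'b"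
  assumes sm: "square_mean_closed TYPE('a)" "square_mean_closed TYPE('b)"
    and closed: "wgm_closed_C TYPE('a)" "wgm_closed_C TYPE('b)"
    and r_range: "\<forall>k\<in>{1..n}. 0 < r k \<and> r k < 1" and r_sum: "(\<Sum>k\<in>{1..n}. r k) = 1"
    and G: "sublattice_C G" "clinear_on G T" "vl_hom_on_C G T"
    and f: "\<forall>k\<in>{1..n}. f k \<in> G" and wgm_in_G: "wgm_C f r n \<in> G"
  shows "T (wgm_C f r n) = wgm_C (\<lambda>k. T (f k)) r n"
proof -
  define S where "S = real_restriction T"
  define g where "g = (\<lambda>k. cabs_re (f k))"
  define h where "h = (\<lambda>k. cabs_re (T (f k)))"
  have G': "sublattice_R (real_section G)" "linear_on_R (real_section G) S"
    "vl_hom_on_R (real_section G) S"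
    unfolding S_def using sublattice_R_real_section linear_on_R_real_restriction
      vl_hom_on_R_real_restriction G by blast+
  have g: "\<forall>k\<in>{1..n}. g k \<in> real_section G"
    using f G(1) unfolding sublattice_C_def real_section_def g_def cvabs_def by blast
  have w_in: "wgm_R g r n \<in> real_section G"
    using wgm_in_G unfolding wgm_C_eq[OF sm(1)] real_section_def g_def by simp
  have h: "\<forall>k\<in>{1..n}. vabs (h k) = S (vabs (g k))"
  proof
    fix k assume k: "k \<in> {1..n}"
    have "vabs (h k) = fst (cvabs (T (f k)))"
      unfolding h_def cvabs_def by (simp add: vabs_of_nonneg cabs_re_nonneg[OF sm(2)])
    also have "\<dots> = fst (T (cvabs (f k)))" using G(3) f k unfolding vl_hom_on_C_def by simp
    also have "\<dots> = S (vabs (g k))"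
      unfolding S_def real_restriction_def g_def cvabs_def
      by (simp add: vabs_of_nonneg cabs_re_nonneg[OF sm(1)])
    finally show "vabs (h k) = S (vabs (g k))" .
  qed
  have w: "is_inf (wgm_set_R g r n) (wgm_R g r n)"
    using wgm_closed_C_is_inf[OF closed(1) sm(1) r_range r_sum] unfolding g_def .
  have v: "is_inf (wgm_set_R h r n) (wgm_R h r n)"
    using wgm_closed_C_is_inf[OF closed(2) sm(2) r_range r_sum] unfolding h_def .
  have "S (wgm_R g r n) = wgm_R h r n"
    using wgm_inf_transfer_eq[OF r_range r_sum G' g w w_in v h] .
  then show ?thesis
    unfolding wgm_C_eq[OF sm(1)] wgm_C_eq[OF sm(2)]
    using vl_hom_on_C_real[OF G w_in] by (simp add: S_def g_def h_def)
qed

lemma vl_hom_iff_wgm_C: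
  fixes T :: "'a::archimedean_real_vector_lattice \<times> 'a \<Rightarrow> 'b::archimedean_real_vector_lattice \<times> 'b"
  assumes sm: "square_mean_closed TYPE('a)" "square_mean_closed TYPE('b)"
    and closed: "wgm_closed_C TYPE('a)" "wgm_closed_C TYPE('b)"
    and r_range: "\<forall>k\<in>{1..n}. 0 < r k \<and> r k < 1" and r_sum: "(\<Sum>k\<in>{1..n}. r k) = 1"
    and T: "clinear_on UNIV T"
  shows "vl_hom_on_C UNIV T \<longleftrightarrow> (\<forall>f. T (wgm_C f r n) = wgm_C (\<lambda>k. T (f k)) r n)"
proof
  assume "vl_hom_on_C UNIV T"
  then show "\<forall>f. T (wgm_C f r n) = wgm_C (\<lambda>k. T (f k)) r n"
    using vl_hom_on_C_wgm_C[OF sm closed r_range r_sum sublattice_C_UNIV T] by simp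
next
  assume "\<forall>f. T (wgm_C f r n) = wgm_C (\<lambda>k. T (f k)) r n"
  then have "T (wgm_C (\<lambda>_. z) r n) = wgm_C (\<lambda>_. T z) r n" for z by blast
  moreover have "wgm_C (\<lambda>_. z) r n = cvabs z" "wgm_C (\<lambda>_. T z) r n = cvabs (T z)" for z
    using r_range r_sum by (intro wgm_C_const sm; auto)+
  ultimately show "vl_hom_on_C UNIV T" unfolding vl_hom_on_C_def by simp
qed

theorem proposition4p1:
  fixes n :: nat and r :: "nat \<Rightarrow> real"
  assumes r_range: "\<forall>k\<in>{1..n}. 0 < r k \<and> r k < 1"
    and r_sum: "(\<Sum>k\<in>{1..n}. r k) = 1"
  shows
   "(wgm_closed_R TYPE('a::archimedean_real_vector_lattice) \<and>
     wgm_closed_R TYPE('b::archimedean_real_vector_lattice) \<longrightarrow>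
      (\<forall>T :: 'a \<Rightarrow> 'b. linear T \<and> positive_map_R T \<longrightarrow>
         (\<forall>f. T (wgm_R f r n) \<le> wgm_R (\<lambda>k. T (vabs (f k))) r n))
    \<and> (\<forall>T :: 'a \<Rightarrow> 'b. linear T \<longrightarrow>
         (vl_hom_on_R UNIV T \<longleftrightarrow> (\<forall>f. T (wgm_R f r n) = wgm_R (\<lambda>k. T (f k)) r n)))
    \<and> (\<forall>(G :: 'a set) (T :: 'a \<Rightarrow> 'b) f.
         sublattice_R G \<and> linear_on_R G T \<and> vl_hom_on_R G T \<and>
         (\<forall>k\<in>{1..n}. f k \<in> G) \<and> wgm_R f r n \<in> G \<longrightarrow>
         T (wgm_R f r n) = wgm_R (\<lambda>k. T (f k)) r n))
  \<and>
   (square_mean_closed TYPE('a) \<and> square_mean_closed TYPE('b) \<and>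
     wgm_closed_C TYPE('a) \<and> wgm_closed_C TYPE('b) \<longrightarrow>
      (\<forall>T :: 'a \<times> 'a \<Rightarrow> 'b \<times> 'b. clinear_on UNIV T \<and> positive_map_C T \<longrightarrow>
         (\<forall>f. le_C (T (wgm_C f r n)) (wgm_C (\<lambda>k. T (cvabs (f k))) r n)))
    \<and> (\<forall>T :: 'a \<times> 'a \<Rightarrow> 'b \<times> 'b. clinear_on UNIV T \<longrightarrow>
         (vl_hom_on_C UNIV T \<longleftrightarrow> (\<forall>f. T (wgm_C f r n) = wgm_C (\<lambda>k. T (f k)) r n)))
    \<and> (\<forall>(G :: ('a \<times> 'a) set) (T :: 'a \<times> 'a \<Rightarrow> 'b \<times> 'b) f.
         sublattice_C G \<and> clinear_on G T \<and> vl_hom_on_C G T \<and>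
         (\<forall>k\<in>{1..n}. f k \<in> G) \<and> wgm_C f r n \<in> G \<longrightarrow>
         T (wgm_C f r n) = wgm_C (\<lambda>k. T (f k)) r n))"
  using r_range r_sum
  by (intro conjI impI allI; elim conjE)
    (simp_all add: positive_map_wgm_R_le vl_hom_iff_wgm_R vl_hom_on_R_wgm_R
      positive_map_wgm_C_le vl_hom_iff_wgm_C vl_hom_on_C_wgm_C)

end
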